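(* Let $d\ge1$ and let $p\in\mathbb{C}[\mathbb{Z}^d]=\mathbb{C}[z_1^{\pm1},\dots,z_d^{\pm1}]$ be non-zero. If $\operatorname{wd}(p)=0$, then $F(r_p^{(2)})(\lambda)=0$ for all $0\le\lambda<|\operatorname{lead}(p)|$ and $F(r_p^{(2)})(\lambda)=1$ for all $\lambda\ge|\operatorname{lead}(p)|$. If $\operatorname{wd}(p)\ge1$, then for all $\lambda\ge0$ \[ F\bigl(r_p^{(2)}\bigr)(\lambda)\le\frac{8\sqrt3}{\sqrt{47}}\cdot d\cdot\operatorname{wd}(p)\cdot\left(\frac{\lambda}{|\operatorname{lead}(p)|}\right)^{\frac{1}{d\cdot\operatorname{wd}(p)}}. \]
   Context: For non-zero $p\in\mathbb{C}[\mathbb{Z}^d]$ write uniquely $p=\sum_{n=n^-}^{n^+} q_n(z_1^{\pm1},\dots,z_{d-1}^{\pm1})\, z_d^n$ with $n^-\le n^+$, $q_n\in\mathbb{C}[\mathbb{Z}^{d-1}]$, $q_{n^-}\neq0\neq q_{n^+}$; set $w(p)=n^+-n^-$ and $q^+(p)=q_{n^+}$. Define $p_0=p$, $p_i=q^+(p_{i-1})\in\mathbb{C}[\mathbb{Z}^{d-i}]$ for $i=1,\dots,d$, $w_0(p)=w(p)$, $w_i(p)=w(p_i)$ for $i=1,\dots,d-1$. Then $\operatorname{wd}(p)=\max\{w_0(p),\dots,w_{d-1}(p)\}$ and $\operatorname{lead}(p)=p_d\in\mathbb{C}\setminus\{0\}$. The operator $r_p^{(2)}\colon L^2(\mathbb{Z}^d)\to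 L^2(\mathbb{Z}^d)$ is multiplication by $p$, and its spectral density function is $F(r_p^{(2)})(\lambda)=\mu_{T^d}\bigl(\{z\in T^d : |p(z)|\le\lambda\}\bigr)$, where $\mu_{T^d}$ is the normalized Haar measure on the torus $T^d=(S^1)^d$. *)

theory Defs
  imports "HOL-Analysis.Analysis"
begin

text \<open>A Laurent polynomial in C[Z^d] is represented by its coefficient function on
exponent vectors e :: nat \<Rightarrow> int; variable z_(i+1) corresponds to index i.\<close>

type_synonym lpoly = "(nat \<Rightarrow> int) \<Rightarrow> complex"

definition lsupp :: "lpoly \<Rightarrow> (nat \<Rightarrow> int) set" where
  "lsupp p = {e. p e \<noteq> 0}"

definition laurent_poly :: "nat \<Rightarrow> lpoly \<Rightarrow> bool" where
  "laurent_poly k p \<longleftrightarrow> finite (lsupp p) \<and> (\<forall>e\<in>lsupp p. \<forall>i\<ge>k. e i = 0)"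

definition top_deg :: "nat \<Rightarrow> lpoly \<Rightarrow> int" where
  "top_deg k p = Max ((\<lambda>e. e (k - 1)) ` lsupp p)"

definition bot_deg :: "nat \<Rightarrow> lpoly \<Rightarrow> int" where
  "bot_deg k p = Min ((\<lambda>e. e (k - 1)) ` lsupp p)"

definition width :: "nat \<Rightarrow> lpoly \<Rightarrow> nat" where
  "width k p = nat (top_deg k p - bot_deg k p)"

text \<open>q^+(p) \<in> C[Z^(k-1)]: the coefficient of the top power of z_k.\<close>
definition qplus :: "nat \<Rightarrow> lpoly \<Rightarrow> lpoly" where
  "qplus k p = (\<lambda>e. if e (k - 1) = 0 then p (e(k - 1 := top_deg k p)) else 0)"

fun lead_seq :: "nat \<Rightarrow> nat \<Rightarrow> lpoly \<Rightarrow> lpoly" where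
  "lead_seq d 0 p = p"
| "lead_seq d (Suc i) p = qplus (d - i) (lead_seq d i p)"

definition wd :: "nat \<Rightarrow> lpoly \<Rightarrow> nat" where
  "wd d p = Max ((\<lambda>i. width (d - i) (lead_seq d i p)) ` {..<d})"

text \<open>p_d is a constant, i.e. supported at the zero exponent vector.\<close>
definition lead :: "nat \<Rightarrow> lpoly \<Rightarrow> complex" where
  "lead d p = lead_seq d d p (\<lambda>_. 0)"

definition lpeval :: "nat \<Rightarrow> lpoly \<Rightarrow> (nat \<Rightarrow> complex) \<Rightarrow> complex" where
  "lpeval d p z = (\<Sum>e\<in>lsupp p. p e * (\<Prod>i<d. z i powi e i))"

definition haar_circle :: "complex measure" where
  "haar_circle = distr (uniform_measure lborel {0..2*pi}) borel cis"

definition haar_torus :: "nat \<Rightarrow> (nat \<Rightarrow> complex) measure" where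
  "haar_torus d = PiM {..<d} (\<lambda>_. haar_circle)"

definition spec_density :: "nat \<Rightarrow> lpoly \<Rightarrow> real \<Rightarrow> real" where
  "spec_density d p t =
     measure (haar_torus d) {z \<in> space (haar_torus d). cmod (lpeval d p z) \<le> t}"

end

theory Submission
  imports Defs
    "HOL-Probability.Infinite_Product_Measure"
    "HOL-Computational_Algebra.Fundamental_Theorem_Algebra"
begin

text \<open>
  Induct on the number of variables. Fix the first d-1 coordinates z of a point of the torus.
  As a function of the last coordinate x, p equals x^b times a polynomial of degree w(p) whose
  leading coefficient is q^+(p)(z); factoring it over \<complex>, |p| \<le> \<lambda> forces x into an arc of length
  at most 8r around one of its roots, where r^w(p) = \<lambda>/|q^+(p)(z)|. So the fibre has measure at
  most 2 w(p) (\<lambda>/|q^+(p)(z)|)^(1/w(p)). Splitting the torus according to whether |q^+(p)| \<le> s,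
  applying the induction hypothesis to q^+(p) and choosing s = |lead p| (\<lambda>/|lead p|)^((d-1)/d)
  balances the two contributions. This yields the bound with constant 2 < 8\<surd>3/\<surd>47.

  If wd(p) = 0, then p is a monomial, so |p| = |lead p| on the torus.
\<close>

section \<open>Arcs of the unit circle\<close>

lemma sin_ge_half_self:
  fixes u :: real
  assumes "0 \<le> u" "u \<le> pi/2"
  shows "u/2 \<le> sin u"
proof -
  have "\<bar>sin u - (\<Sum>m<3. sin_coeff m * u ^ m)\<bar> \<le> inverse (fact 3) * \<bar>u\<bar> ^ 3"
    by (rule Maclaurin_sin_bound)
  moreover have "(\<Sum>m<3. sin_coeff m * u ^ m) = u" "(fact 3 :: real) = 6"
    by (simp_all add: numeral_3_eq_3 sin_coeff_def)
  ultimately have "\<bar>sin u - u\<bar> \<le> u^3/6" using assms by simp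
  hence taylor: "u - u^3/6 \<le> sin u" unfolding abs_le_iff by linarith
  have "u \<le> 1.6" using assms pi_approx by simp
  hence "u^2 \<le> 1.6^2" using assms by (intro power_mono) auto
  hence "u^2 \<le> 3" by (simp add: power2_eq_square)
  have "u^3 = u * u^2" by (simp add: power2_eq_square power3_eq_cube)
  also have "\<dots> \<le> u * 3" using \<open>u^2 \<le> 3\<close> assms by (intro mult_left_mono) auto
  finally show ?thesis using taylor by simp
qed

lemma norm_cis_diff: "cmod (cis a - cis b) = 2 * \<bar>sin ((a - b)/2)\<bar>"
proof -
  have "(cmod (cis a - cis b))^2 = (cos a - cos b)^2 + (sin a - sin b)^2"
    by (simp add: cmod_power2)
  also have "\<dots> = 2 - 2 * cos (a - b)"
    by (simp add: power2_diff cos_diff algebra_simps)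
  also have "cos (a - b) = cos (2 * ((a - b)/2))" by (rule arg_cong[where f=cos]) simp
  also have "\<dots> = 1 - 2 * sin ((a - b)/2)^2" by (rule cos_double_sin)
  finally have "(cmod (cis a - cis b))^2 = (2 * \<bar>sin ((a - b)/2)\<bar>)^2"
    by (simp add: power_mult_distrib)
  thus ?thesis by (rule power2_eq_imp_eq) simp_all
qed

lemma sin_half_le_imp_arc_le:
  fixes v r :: real
  assumes "0 \<le> v" "v \<le> 2*pi" "sin (v/2) \<le> r"
  shows "v \<le> 4*r \<or> 2*pi - v \<le> 4*r"
proof (cases "v \<le> pi")
  case True
  have "v/2/2 \<le> sin (v/2)" using assms True by (intro sin_ge_half_self) auto
  thus ?thesis using assms(3) by linarith
next
  case False
  have "sin (v/2) = sin ((2*pi - v)/2)"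
    by (metis sin_pi_minus diff_divide_distrib nonzero_mult_div_cancel_left zero_neq_numeral)
  moreover have "(2*pi - v)/2/2 \<le> sin ((2*pi - v)/2)"
    using assms False by (intro sin_ge_half_self) auto
  ultimately have "(2*pi - v)/2/2 \<le> r" using assms(3) by simp
  thus ?thesis by simp
qed

lemma measurable_cis [measurable]: "cis \<in> borel_measurable borel"
  by (intro borel_measurable_continuous_onI continuous_intros)

text \<open>The angles in the set lie in an arc of length 4r starting at the smallest of them,
  possibly wrapping around 2\<pi>.\<close>
lemma emeasure_angles_near_point_le:
  fixes a :: complex and r :: real
  assumes r: "0 \<le> r"
  shows "emeasure lborel {\<theta>\<in>{0..2*pi}. cmod (cis \<theta> - a) \<le> r} \<le> ennreal (8*r)"
proof -
  define S where "S = {\<theta>\<in>{0..2*pi}. cmod (cis \<theta> - a) \<le> r}"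
  show ?thesis
  proof (cases "S = {}")
    case True
    thus ?thesis unfolding S_def[symmetric] by simp
  next
    case False
    have "compact S"
      unfolding S_def Collect_conj_eq[of "\<lambda>\<theta>. \<theta> \<in> _", simplified]
      by (intro compact_Int_closed compact_Icc closed_Collect_le continuous_intros)
    then obtain t where t: "t \<in> S" and t_min: "\<And>x. x \<in> S \<Longrightarrow> t \<le> x"
      using compact_attains_inf[OF _ False] by blast
    have S_sub: "S \<subseteq> {t..t+4*r} \<union> {t+2*pi-4*r..2*pi}"
    proof
      fix x assume x: "x \<in> S"
      have "cmod (cis x - cis t) \<le> cmod (cis x - a) + cmod (cis t - a)"
        by (metis norm_minus_commute diff_add_cancel add_diff_eq
            norm_triangle_ineq4)
      also have "\<dots> \<le> 2 * r" using x t unfolding S_def by simp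
      finally have "sin ((x - t)/2) \<le> r"
        using t_min[OF x] by (simp add: norm_cis_diff)
      hence "x - t \<le> 4*r \<or> 2*pi - (x - t) \<le> 4*r"
        using t_min[OF x] x t unfolding S_def by (intro sin_half_le_imp_arc_le) auto
      thus "x \<in> {t..t+4*r} \<union> {t+2*pi-4*r..2*pi}" using t_min[OF x] x unfolding S_def by auto
    qed
    have "emeasure lborel S \<le> emeasure lborel {t..t+4*r} + emeasure lborel {t+2*pi-4*r..2*pi}"
      by (rule order_trans[OF emeasure_mono[OF S_sub] emeasure_subadditive]) simp_all
    also have "\<dots> \<le> ennreal (4*r) + ennreal (4*r)"
      using t r unfolding S_def by (intro add_mono) (auto simp: emeasure_lborel_Icc_eq intro!: ennreal_leI)
    also have "\<dots> = ennreal (8*r)" using r by (simp flip: ennreal_plus)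
    finally show ?thesis unfolding S_def .
  qed
qed

section \<open>The Haar measure on the circle and the torus\<close>

lemma prob_space_haar_circle: "prob_space haar_circle"
  unfolding haar_circle_def
  by (intro prob_space.prob_space_distr prob_space_uniform_measure) auto

lemma space_haar_circle [simp]: "space haar_circle = UNIV"
  and sets_haar_circle [simp, measurable_cong]: "sets haar_circle = sets borel"
  unfolding haar_circle_def by auto

lemma emeasure_haar_circle:
  assumes "A \<in> sets borel"
  shows "emeasure haar_circle A = emeasure lborel ({0..2*pi} \<inter> cis -` A) / ennreal (2*pi)"
  using assms measurable_sets[OF measurable_cis assms]
  unfolding haar_circle_def by (simp add: emeasure_distr)

lemma AE_haar_circle_norm: "AE x in haar_circle. cmod x = 1"
  unfolding haar_circle_def by (subst AE_distr_iff) auto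

lemma prob_space_haar_torus: "prob_space (haar_torus d)"
  unfolding haar_torus_def by (intro prob_space_PiM prob_space_haar_circle)

lemma AE_haar_torus_norm: "AE z in haar_torus d. \<forall>i\<in>{..<d}. cmod (z i) = 1"
  unfolding haar_torus_def
  by (intro AE_finite_allI AE_PiM_component[where P="\<lambda>x. cmod x = 1"]
      prob_space_haar_circle AE_haar_circle_norm) auto

lemma emeasure_haar_circle_sublevel_le:
  fixes F :: "complex \<Rightarrow> complex" and a :: "nat \<Rightarrow> complex"
  assumes F: "F \<in> borel_measurable borel" and c: "c \<noteq> 0"
    and F_eq: "\<And>x. cmod x = 1 \<Longrightarrow> cmod (F x) = cmod c * (\<Prod>j<n. cmod (x - a j))"
    and W: "1 \<le> W" "n \<le> W" and lam: "0 < lam"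
  shows "emeasure haar_circle {x. cmod (F x) \<le> lam}
           \<le> ennreal (2 * real W * (lam / cmod c) powr (1 / real W))"
proof -
  interpret prob_space haar_circle by (rule prob_space_haar_circle)
  define x0 where "x0 = lam / cmod c"
  have x0: "0 < x0" unfolding x0_def using lam c by simp
  show ?thesis
  proof (cases "1 \<le> x0")
    case True
    have "1 \<le> x0 powr (1 / real W)" using True by (intro ge_one_powr_ge_zero) auto
    moreover have "(1::real) \<le> 2 * W" using W by simp
    ultimately have "1 \<le> 2 * real W * x0 powr (1 / real W)"
      using mult_mono[of 1 "2 * real W" 1 "x0 powr (1 / real W)"] by simp
    thus ?thesis unfolding x0_def[symmetric]
      by (intro order_trans[OF emeasure_le_1]) (simp add: ennreal_leI flip: ennreal_1)
  next
    case False
    define r where "r = x0 powr (1 / real W)"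
    have r: "0 < r" "r \<le> 1" unfolding r_def using x0 False by (auto intro: powr_le1)
    have "x0 = r powr real W" unfolding r_def using x0 W by (simp add: powr_powr)
    also have "\<dots> = r ^ W" using r by (simp add: powr_realpow)
    also have "\<dots> \<le> r ^ n" using r W by (intro power_decreasing) auto
    finally have x0_le: "x0 \<le> r ^ n" .
    define D where "D j = {\<theta>\<in>{0..2*pi}. cmod (cis \<theta> - a j) \<le> r}" for j
    have D [measurable]: "D j \<in> sets lborel" for j unfolding D_def by measurable
    have UD: "(\<Union>j<n. D j) \<in> sets borel" by (intro sets.finite_UN) (use D in auto)
    have sub: "{0..2*pi} \<inter> {t. cmod (F (cis t)) \<le> lam} \<subseteq> (\<Union>j<n. D j)"
    proof (rule subsetI, rule ccontr)
      fix t assume t: "t \<in> {0..2*pi} \<inter> {t. cmod (F (cis t)) \<le> lam}" "t \<notin> (\<Union>j<n. D j)"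
      hence far: "\<forall>j<n. r < cmod (cis t - a j)" unfolding D_def by (auto simp: not_le)
      have "x0 < (\<Prod>j<n. cmod (cis t - a j))"
      proof (cases "n = 0")
        case True thus ?thesis using False by simp
      next
        case n: False
        have "x0 \<le> (\<Prod>j<n. r)" using x0_le by simp
        also have "\<dots> < (\<Prod>j<n. cmod (cis t - a j))"
          using far r n by (intro prod_mono_strict[of 0]) auto
        finally show ?thesis .
      qed
      hence "cmod c * x0 < cmod c * (\<Prod>j<n. cmod (cis t - a j))" using c by simp
      hence "lam < cmod (F (cis t))" using F_eq[of "cis t"] c unfolding x0_def by simp
      thus False using t by simp
    qed
    have "emeasure haar_circle {x. cmod (F x) \<le> lam}
          \<le> emeasure lborel (\<Union>j<n. D j) / ennreal (2*pi)"
      using F by (subst emeasure_haar_circle)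
        (auto intro!: divide_right_mono_ennreal emeasure_mono[OF sub] UD)
    also have "\<dots> \<le> (\<Sum>j<n. ennreal (8*r)) / ennreal (2*pi)"
      using r unfolding D_def
      by (intro divide_right_mono_ennreal order_trans[OF emeasure_subadditive_finite]
          sum_mono emeasure_angles_near_point_le) auto
    also have "\<dots> = ennreal (real n * (8*r) / (2*pi))"
      using r by (simp add: ennreal_of_nat_eq_real_of_nat divide_ennreal flip: ennreal_mult)
    also have "\<dots> \<le> ennreal (2 * real W * r)"
    proof (rule ennreal_leI)
      have "real n * (8*r) / (2*pi) \<le> real n * (8*r) / 4"
        using r pi_gt3 by (intro divide_left_mono) auto
      also have "\<dots> \<le> 2 * real W * r" using r W by simp
      finally show "real n * (8*r) / (2*pi) \<le> 2 * real W * r" .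
    qed
    finally show ?thesis unfolding r_def x0_def .
  qed
qed

section \<open>The leading coefficient in the last variable\<close>

lemma top_deg_Suc: "top_deg (Suc d) p = Max ((\<lambda>e. e d) ` lsupp p)"
  and bot_deg_Suc: "bot_deg (Suc d) p = Min ((\<lambda>e. e d) ` lsupp p)"
  and width_Suc: "width (Suc d) p = nat (top_deg (Suc d) p - bot_deg (Suc d) p)"
  and qplus_Suc: "qplus (Suc d) p = (\<lambda>e. if e d = 0 then p (e(d := top_deg (Suc d) p)) else 0)"
  unfolding top_deg_def bot_deg_def width_def qplus_def by (simp_all only: diff_Suc_1)

lemma
  assumes "laurent_poly (Suc d) p" "e \<in> lsupp p"
  shows le_top_deg: "e d \<le> top_deg (Suc d) p"
    and bot_deg_le: "bot_deg (Suc d) p \<le> e d"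
  using assms unfolding top_deg_Suc bot_deg_Suc laurent_poly_def by auto

lemma lsupp_qplus:
  "lsupp (qplus (Suc d) p) = (\<lambda>e. e(d := 0)) ` {e \<in> lsupp p. e d = top_deg (Suc d) p}"
proof (intro equalityI subsetI)
  fix f assume "f \<in> lsupp (qplus (Suc d) p)"
  hence "f d = 0" "f(d := top_deg (Suc d) p) \<in> lsupp p"
    unfolding lsupp_def qplus_Suc by (auto split: if_splits)
  thus "f \<in> (\<lambda>e. e(d := 0)) ` {e \<in> lsupp p. e d = top_deg (Suc d) p}"
    by (intro image_eqI[of _ _ "f(d := top_deg (Suc d) p)"]) auto
next
  fix f assume "f \<in> (\<lambda>e. e(d := 0)) ` {e \<in> lsupp p. e d = top_deg (Suc d) p}"
  then obtain e where "e \<in> lsupp p" "e d = top_deg (Suc d) p" "f = e(d := 0)" by auto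
  moreover from this have "f(d := top_deg (Suc d) p) = e" by auto
  ultimately show "f \<in> lsupp (qplus (Suc d) p)" unfolding lsupp_def qplus_Suc by auto
qed

lemma
  assumes "laurent_poly (Suc d) p" "lsupp p \<noteq> {}"
  shows laurent_poly_qplus: "laurent_poly d (qplus (Suc d) p)"
    and lsupp_qplus_nonempty: "lsupp (qplus (Suc d) p) \<noteq> {}"
proof -
  have "finite (lsupp p)" "\<And>e i. e \<in> lsupp p \<Longrightarrow> Suc d \<le> i \<Longrightarrow> e i = 0"
    using assms(1) unfolding laurent_poly_def by auto
  thus "laurent_poly d (qplus (Suc d) p)"
    unfolding laurent_poly_def lsupp_qplus by (auto simp: le_Suc_eq)
  have "top_deg (Suc d) p \<in> (\<lambda>e. e d) ` lsupp p"
    using assms \<open>finite (lsupp p)\<close> unfolding top_deg_Suc by (intro Max_in) auto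
  thus "lsupp (qplus (Suc d) p) \<noteq> {}" unfolding lsupp_qplus by auto
qed

lemma lpeval_qplus:
  "lpeval d (qplus (Suc d) p) z =
     (\<Sum>e \<in> {e \<in> lsupp p. e d = top_deg (Suc d) p}. p e * (\<Prod>i<d. z i powi e i))"
proof -
  let ?S = "{e \<in> lsupp p. e d = top_deg (Suc d) p}"
  have inj: "inj_on (\<lambda>e. e(d := 0)) ?S"
    by (rule inj_onI) (metis (mono_tags, lifting) fun_upd_triv fun_upd_upd mem_Collect_eq)
  have "lpeval d (qplus (Suc d) p) z
        = (\<Sum>e\<in>?S. qplus (Suc d) p (e(d := 0)) * (\<Prod>i<d. z i powi (e(d := 0)) i))"
    unfolding lpeval_def lsupp_qplus sum.reindex[OF inj] comp_def ..
  also have "\<dots> = (\<Sum>e\<in>?S. p e * (\<Prod>i<d. z i powi e i))"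
  proof (intro sum.cong refl arg_cong2[where f = "(*)"] prod.cong)
    fix e assume "e \<in> ?S"
    hence "(e(d := 0))(d := top_deg (Suc d) p) = e" by auto
    thus "qplus (Suc d) p (e(d := 0)) = p e" unfolding qplus_Suc by simp
  qed auto
  finally show ?thesis .
qed

lemma lead_seq_Suc_Suc: "lead_seq (Suc d) (Suc i) p = lead_seq d i (qplus (Suc d) p)"
  by (induction i) auto

lemma lead_Suc: "lead (Suc d) p = lead d (qplus (Suc d) p)"
  unfolding lead_def by (simp only: lead_seq_Suc_Suc)

lemma all_widths_Suc:
  "(\<forall>i<Suc d. P (width (Suc d - i) (lead_seq (Suc d) i p))) \<longleftrightarrow>
     P (width (Suc d) p) \<and> (\<forall>i<d. P (width (d - i) (lead_seq d i (qplus (Suc d) p))))"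
  by (simp only: All_less_Suc2 lead_seq_Suc_Suc diff_Suc_Suc lead_seq.simps(1) diff_zero)

lemma lsupp_laurent_poly_0: "laurent_poly 0 q \<Longrightarrow> lsupp q \<subseteq> {\<lambda>_. 0}"
  unfolding laurent_poly_def by (auto simp: fun_eq_iff)

lemma lpeval_laurent_poly_0: "laurent_poly 0 q \<Longrightarrow> lpeval 0 q z = q (\<lambda>_. 0)"
  using lsupp_laurent_poly_0[of q] unfolding lpeval_def lsupp_def
  by (cases "q (\<lambda>_. 0) = 0") (auto simp: subset_singleton_iff)

lemma lead_nonzero: "laurent_poly d p \<Longrightarrow> lsupp p \<noteq> {} \<Longrightarrow> lead d p \<noteq> 0"
proof (induction d arbitrary: p)
  case 0
  thus ?case using lsupp_laurent_poly_0 unfolding lead_def lsupp_def by fastforce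
next
  case (Suc d)
  thus ?case unfolding lead_Suc by (intro Suc.IH laurent_poly_qplus lsupp_qplus_nonempty)
qed

definition last_var_poly :: "nat \<Rightarrow> lpoly \<Rightarrow> (nat \<Rightarrow> complex) \<Rightarrow> complex poly" where
  "last_var_poly d p z =
     (\<Sum>e\<in>lsupp p. monom (p e * (\<Prod>i<d. z i powi e i)) (nat (e d - bot_deg (Suc d) p)))"

lemma lpeval_last_var_poly:
  assumes p: "laurent_poly (Suc d) p" and x: "x \<noteq> 0"
  shows "lpeval (Suc d) p (z(d := x)) = x powi bot_deg (Suc d) p * poly (last_var_poly d p z) x"
proof -
  let ?b = "bot_deg (Suc d) p"
  have "lpeval (Suc d) p (z(d := x)) = (\<Sum>e\<in>lsupp p. p e * ((\<Prod>i<d. z i powi e i) * x powi e d))"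
    unfolding lpeval_def by (intro sum.cong refl) simp
  also have "\<dots> = (\<Sum>e\<in>lsupp p. x powi ?b * (p e * (\<Prod>i<d. z i powi e i) * x ^ nat (e d - ?b)))"
  proof (intro sum.cong refl)
    fix e assume "e \<in> lsupp p"
    hence "e d = ?b + int (nat (e d - ?b))" using bot_deg_le[OF p] by simp
    hence "x powi e d = x powi ?b * x ^ nat (e d - ?b)"
      using x by (metis power_int_add power_int_of_nat)
    thus "p e * ((\<Prod>i<d. z i powi e i) * x powi e d)
          = x powi ?b * (p e * (\<Prod>i<d. z i powi e i) * x ^ nat (e d - ?b))"
      by (simp only: mult_ac)
  qed
  also have "\<dots> = x powi ?b * poly (last_var_poly d p z) x"
    unfolding last_var_poly_def poly_sum poly_monom sum_distrib_left ..
  finally show ?thesis .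
qed

lemma coeff_last_var_poly:
  "coeff (last_var_poly d p z) k =
     (\<Sum>e\<in>lsupp p. if nat (e d - bot_deg (Suc d) p) = k then p e * (\<Prod>i<d. z i powi e i) else 0)"
  unfolding last_var_poly_def coeff_sum coeff_monom ..

lemma degree_last_var_poly_le:
  assumes p: "laurent_poly (Suc d) p"
  shows "degree (last_var_poly d p z) \<le> width (Suc d) p"
proof (rule degree_le, intro allI impI)
  fix k assume "width (Suc d) p < k"
  moreover have "nat (e d - bot_deg (Suc d) p) \<le> width (Suc d) p" if "e \<in> lsupp p" for e
    using le_top_deg[OF p that] unfolding width_Suc by simp
  ultimately show "coeff (last_var_poly d p z) k = 0"
    unfolding coeff_last_var_poly by (intro sum.neutral) fastforce
qed

lemma coeff_last_var_poly_width:
  assumes p: "laurent_poly (Suc d) p"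
  shows "coeff (last_var_poly d p z) (width (Suc d) p) = lpeval d (qplus (Suc d) p) z"
proof -
  have "nat (e d - bot_deg (Suc d) p) = width (Suc d) p \<longleftrightarrow> e d = top_deg (Suc d) p"
    if "e \<in> lsupp p" for e
    using le_top_deg[OF p that] bot_deg_le[OF p that] unfolding width_Suc by auto
  hence "coeff (last_var_poly d p z) (width (Suc d) p)
         = (\<Sum>e\<in>lsupp p. if e d = top_deg (Suc d) p then p e * (\<Prod>i<d. z i powi e i) else 0)"
    unfolding coeff_last_var_poly by (intro sum.cong) auto
  also have "\<dots> = lpeval d (qplus (Suc d) p) z"
    using p unfolding lpeval_qplus laurent_poly_def by (simp add: sum.inter_filter)
  finally show ?thesis .
qed

lemma norm_lpeval_fibre_eq_prod:
  assumes p: "laurent_poly (Suc d) p" and c: "lpeval d (qplus (Suc d) p) z \<noteq> 0"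
  obtains a where "\<And>x. cmod x = 1 \<Longrightarrow> cmod (lpeval (Suc d) p (z(d := x)))
      = cmod (lpeval d (qplus (Suc d) p) z) * (\<Prod>j<width (Suc d) p. cmod (x - a j))"
proof -
  let ?P = "last_var_poly d p z" and ?w = "width (Suc d) p" and ?c = "lpeval d (qplus (Suc d) p) z"
  have deg: "degree ?P = ?w"
    by (rule antisym[OF degree_last_var_poly_le[OF p] le_degree])
      (simp add: coeff_last_var_poly_width[OF p] c)
  obtain a where a: "smult (lead_coeff ?P) (\<Prod>j<degree ?P. [:-a j, 1:]) = ?P"
    by (rule complex_poly_decompose')
  have poly_P: "poly ?P x = ?c * (\<Prod>j<?w. x - a j)" for x
    by (subst a[symmetric]) (simp add: poly_prod deg coeff_last_var_poly_width[OF p])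
  show ?thesis
  proof (rule that)
    fix x :: complex assume x: "cmod x = 1"
    hence "x \<noteq> 0" by auto
    thus "cmod (lpeval (Suc d) p (z(d := x))) = cmod ?c * (\<Prod>j<?w. cmod (x - a j))"
      using x by (simp add: lpeval_last_var_poly[OF p] poly_P norm_mult norm_power_int
          flip: prod_norm)
  qed
qed

section \<open>Measurability and Fubini's theorem on the torus\<close>

lemma borel_measurable_power_int_complex [measurable]:
  "(\<lambda>x::complex. x powi n) \<in> borel_measurable borel"
  unfolding power_int_def by measurable

lemma borel_measurable_lpeval [measurable]: "lpeval d p \<in> borel_measurable (haar_torus d)"
  unfolding lpeval_def haar_torus_def by measurable

lemma haar_torus_Suc: "haar_torus (Suc d) = PiM (insert d {..<d}) (\<lambda>_. haar_circle)"
  unfolding haar_torus_def lessThan_Suc ..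

lemma measurable_fun_upd_haar_torus:
  "z \<in> space (haar_torus d) \<Longrightarrow> (\<lambda>x. z(d := x)) \<in> measurable haar_circle (haar_torus (Suc d))"
  unfolding haar_torus_Suc unfolding haar_torus_def by (intro measurable_component_update) auto

lemma borel_measurable_lpeval_fibre:
  "z \<in> space (haar_torus d) \<Longrightarrow> (\<lambda>x. lpeval (Suc d) p (z(d := x))) \<in> borel_measurable borel"
  using measurable_compose[OF measurable_fun_upd_haar_torus borel_measurable_lpeval]
  by (simp add: measurable_cong_sets[OF sets_haar_circle refl, symmetric])

lemma emeasure_haar_torus_Suc:
  assumes A: "A \<in> sets (haar_torus (Suc d))"
  shows "emeasure (haar_torus (Suc d)) A
           = (\<integral>\<^sup>+ z. emeasure haar_circle {x. z(d := x) \<in> A} \<partial>haar_torus d)"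
proof -
  interpret product_sigma_finite "\<lambda>_::nat. haar_circle"
    unfolding product_sigma_finite_def
    using prob_space_imp_sigma_finite[OF prob_space_haar_circle] by simp
  have "emeasure (haar_torus (Suc d)) A = (\<integral>\<^sup>+ z. indicator A z \<partial>haar_torus (Suc d))"
    using A by simp
  also have "\<dots> = (\<integral>\<^sup>+ z. (\<integral>\<^sup>+ x. indicator A (z(d := x)) \<partial>haar_circle) \<partial>haar_torus d)"
    using A unfolding haar_torus_Suc unfolding haar_torus_def
    by (intro product_nn_integral_insert) auto
  also have "\<dots> = (\<integral>\<^sup>+ z. emeasure haar_circle {x. z(d := x) \<in> A} \<partial>haar_torus d)"
  proof (intro nn_integral_cong)
    fix z assume "z \<in> space (haar_torus d)"
    hence "{x. z(d := x) \<in> A} \<in> sets haar_circle"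
      using measurable_sets[OF measurable_fun_upd_haar_torus A] by (simp add: vimage_def)
    thus "(\<integral>\<^sup>+ x. indicator A (z(d := x)) \<partial>haar_circle) = emeasure haar_circle {x. z(d := x) \<in> A}"
      by (simp flip: nn_integral_indicator add: indicator_def)
  qed
  finally show ?thesis .
qed

lemma emeasure_haar_torus_Suc_sublevel:
  "emeasure (haar_torus (Suc d)) {z \<in> space (haar_torus (Suc d)). cmod (lpeval (Suc d) p z) \<le> lam}
   = (\<integral>\<^sup>+ z. emeasure haar_circle {x. cmod (lpeval (Suc d) p (z(d := x))) \<le> lam} \<partial>haar_torus d)"
  by (subst emeasure_haar_torus_Suc, measurable)
    (intro nn_integral_cong arg_cong[where f = "emeasure haar_circle"] Collect_cong,
     use measurable_space[OF measurable_fun_upd_haar_torus] in auto)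

lemma emeasure_fibre_sublevel_le:
  assumes p: "laurent_poly (Suc d) p" and W: "1 \<le> W" "width (Suc d) p \<le> W"
    and lam: "0 < lam" and z: "z \<in> space (haar_torus d)"
    and c: "lpeval d (qplus (Suc d) p) z \<noteq> 0"
  shows "emeasure haar_circle {x. cmod (lpeval (Suc d) p (z(d := x))) \<le> lam}
         \<le> ennreal (2 * real W * (lam / cmod (lpeval d (qplus (Suc d) p) z)) powr (1 / real W))"
  by (rule norm_lpeval_fibre_eq_prod[OF p c])
    (rule emeasure_haar_circle_sublevel_le[OF borel_measurable_lpeval_fibre[OF z] c _ W lam])

lemma emeasure_sublevel_one_var_le:
  assumes p: "laurent_poly (Suc 0) p" "lsupp p \<noteq> {}" and W: "1 \<le> W" "width (Suc 0) p \<le> W"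
    and lam: "0 < lam"
  shows "emeasure (haar_torus (Suc 0)) {z \<in> space (haar_torus (Suc 0)). cmod (lpeval (Suc 0) p z) \<le> lam}
           \<le> ennreal (2 * real W * (lam / cmod (lead (Suc 0) p)) powr (1 / real W))"
proof -
  interpret prob_space "haar_torus 0" by (rule prob_space_haar_torus)
  have lead: "lpeval 0 (qplus (Suc 0) p) z = lead (Suc 0) p" for z
    using lpeval_laurent_poly_0[OF laurent_poly_qplus[OF p]] by (simp add: lead_def)
  have "emeasure (haar_torus (Suc 0)) {z \<in> space (haar_torus (Suc 0)). cmod (lpeval (Suc 0) p z) \<le> lam}
        \<le> (\<integral>\<^sup>+ z. ennreal (2 * real W * (lam / cmod (lead (Suc 0) p)) powr (1 / real W)) \<partial>haar_torus 0)"
    unfolding emeasure_haar_torus_Suc_sublevel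
    using emeasure_fibre_sublevel_le[OF p(1) W lam] lead_nonzero[OF p]
    by (intro nn_integral_mono) (simp add: lead)
  thus ?thesis by (simp add: emeasure_space_1)
qed

lemma emeasure_sublevel_Suc_le:
  assumes p: "laurent_poly (Suc d) p" and W: "1 \<le> W" "width (Suc d) p \<le> W"
    and lam: "0 < lam" and s: "0 < s"
  shows "emeasure (haar_torus (Suc d)) {z \<in> space (haar_torus (Suc d)). cmod (lpeval (Suc d) p z) \<le> lam}
    \<le> emeasure (haar_torus d) {z \<in> space (haar_torus d). cmod (lpeval d (qplus (Suc d) p) z) \<le> s}
       + ennreal (2 * real W * (lam / s) powr (1 / real W))"
proof -
  interpret prob_space haar_circle by (rule prob_space_haar_circle)
  interpret T: prob_space "haar_torus d" by (rule prob_space_haar_torus)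
  let ?S = "{z \<in> space (haar_torus d). cmod (lpeval d (qplus (Suc d) p) z) \<le> s}"
  let ?K = "ennreal (2 * real W * (lam / s) powr (1 / real W))"
  have fibre_le: "emeasure haar_circle {x. cmod (lpeval (Suc d) p (z(d := x))) \<le> lam} \<le> indicator ?S z + ?K"
    if z: "z \<in> space (haar_torus d)" for z
  proof (cases "z \<in> ?S")
    case True
    have "emeasure haar_circle {x. cmod (lpeval (Suc d) p (z(d := x))) \<le> lam} \<le> 1"
      by (rule emeasure_le_1)
    thus ?thesis using True by (auto intro: add_increasing2)
  next
    case False
    let ?c = "lpeval d (qplus (Suc d) p) z"
    have c: "s < cmod ?c" using False z by simp
    have "emeasure haar_circle {x. cmod (lpeval (Suc d) p (z(d := x))) \<le> lam}
          \<le> ennreal (2 * real W * (lam / cmod ?c) powr (1 / real W))"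
      using c s by (intro emeasure_fibre_sublevel_le[OF p W lam z]) auto
    also have "\<dots> \<le> ?K"
      using c s lam by (intro ennreal_leI mult_left_mono powr_mono2 divide_left_mono)
        (auto simp: zero_less_mult_iff)
    finally show ?thesis by (simp add: add_increasing)
  qed
  have "emeasure (haar_torus (Suc d)) {z \<in> space (haar_torus (Suc d)). cmod (lpeval (Suc d) p z) \<le> lam}
        \<le> (\<integral>\<^sup>+ z. indicator ?S z + ?K \<partial>haar_torus d)"
    unfolding emeasure_haar_torus_Suc_sublevel by (intro nn_integral_mono fibre_le)
  also have "\<dots> = emeasure (haar_torus d) ?S + ?K"
    by (subst nn_integral_add) (auto simp: T.emeasure_space_1)
  finally show ?thesis .
qed

lemma powr_balance:
  fixes x k w :: real
  assumes "0 < x" "0 < k" "0 < w"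
  shows "k * w * (x powr (k / (k + 1))) powr (1 / (k * w)) + w * (x / x powr (k / (k + 1))) powr (1 / w)
           = (k + 1) * w * x powr (1 / ((k + 1) * w))"
proof -
  have first: "(x powr (k / (k + 1))) powr (1 / (k * w)) = x powr (1 / ((k + 1) * w))"
    using assms by (simp add: powr_powr field_simps)
  have "x / x powr (k / (k + 1)) = x powr (1 - k / (k + 1))"
    using assms by (simp add: powr_diff)
  also have "1 - k / (k + 1) = 1 / (k + 1)" using assms by (simp add: field_simps)
  finally have "(x / x powr (k / (k + 1))) powr (1 / w) = x powr (1 / ((k + 1) * w))"
    using assms by (simp add: powr_powr)
  with first show ?thesis by (simp add: algebra_simps)
qed

lemma emeasure_sublevel_le:
  assumes "laurent_poly (Suc d) p" "lsupp p \<noteq> {}" "1 \<le> W"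
    and "\<forall>i<Suc d. width (Suc d - i) (lead_seq (Suc d) i p) \<le> W" and "0 < lam"
  shows "emeasure (haar_torus (Suc d)) {z \<in> space (haar_torus (Suc d)). cmod (lpeval (Suc d) p z) \<le> lam}
     \<le> ennreal (2 * real (Suc d) * real W
                 * (lam / cmod (lead (Suc d) p)) powr (1 / (real (Suc d) * real W)))"
  using assms
proof (induction d arbitrary: p lam)
  case 0
  thus ?case using emeasure_sublevel_one_var_le[of p W lam] by simp
next
  case (Suc d)
  note p = Suc.prems(1,2) and W = Suc.prems(3) and lam = Suc.prems(5)
  define p1 where "p1 = qplus (Suc (Suc d)) p"
  have p1: "laurent_poly (Suc d) p1" "lsupp p1 \<noteq> {}"
    unfolding p1_def using laurent_poly_qplus[OF p] lsupp_qplus_nonempty[OF p] by auto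
  have widths: "width (Suc (Suc d)) p \<le> W"
      "\<forall>i<Suc d. width (Suc d - i) (lead_seq (Suc d) i p1) \<le> W"
    using Suc.prems(4) unfolding p1_def
    by (simp_all only: all_widths_Suc[where P = "\<lambda>w. w \<le> W" and d = "Suc d"]) blast
  define k where "k = real (Suc d)"
  define L where "L = cmod (lead (Suc d) p1)"
  define x where "x = lam / L"
  define s where "s = L * x powr (k / (k + 1))"
  have L: "0 < L" unfolding L_def using lead_nonzero[OF p1] by simp
  have x: "0 < x" and s: "0 < s" unfolding x_def s_def using lam L by simp_all
  have "emeasure (haar_torus (Suc (Suc d)))
          {z \<in> space (haar_torus (Suc (Suc d))). cmod (lpeval (Suc (Suc d)) p z) \<le> lam}
        \<le> emeasure (haar_torus (Suc d)) {z \<in> space (haar_torus (Suc d)). cmod (lpeval (Suc d) p1 z) \<le> s}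
          + ennreal (2 * real W * (lam / s) powr (1 / real W))"
    unfolding p1_def using W widths(1) lam s by (rule emeasure_sublevel_Suc_le[OF p(1)])
  also have "\<dots> \<le> ennreal (2 * k * real W * (s / L) powr (1 / (k * real W)))
                   + ennreal (2 * real W * (lam / s) powr (1 / real W))"
    using Suc.IH[OF p1 W widths(2) s] unfolding k_def L_def by (intro add_right_mono)
  also have "\<dots> = ennreal (2 * (k + 1) * real W * x powr (1 / ((k + 1) * real W)))"
  proof -
    have "s / L = x powr (k / (k + 1))" "lam / s = x / x powr (k / (k + 1))"
      unfolding s_def x_def using L by (simp_all add: field_simps)
    thus ?thesis
      using powr_balance[OF x, of k "real W"] W x unfolding k_def
      by (simp add: ennreal_plus[symmetric] algebra_simps del: ennreal_plus)
  qed
  finally show ?case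
    unfolding x_def L_def k_def p1_def lead_Suc[of "Suc d" p] by (simp add: algebra_simps)
qed

lemma width_le_wd: "i < d \<Longrightarrow> width (d - i) (lead_seq d i p) \<le> wd d p"
  unfolding wd_def by (auto intro: Max_ge)

lemma widths_zero_imp_monomial:
  "laurent_poly d p \<Longrightarrow> lsupp p \<noteq> {} \<Longrightarrow> \<forall>i<d. width (d - i) (lead_seq d i p) = 0 \<Longrightarrow>
   \<exists>e. lsupp p = {e} \<and> p e = lead d p"
proof (induction d arbitrary: p)
  case 0
  hence "lsupp p = {\<lambda>_. 0}" using lsupp_laurent_poly_0 by blast
  thus ?case unfolding lead_def lsupp_def by auto
next
  case (Suc d)
  let ?t = "top_deg (Suc d) p"
  define p1 where "p1 = qplus (Suc d) p"
  have p: "laurent_poly (Suc d) p" "lsupp p \<noteq> {}" using Suc.prems by auto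
  have "width (Suc d) p = 0" "\<forall>i<d. width (d - i) (lead_seq d i p1) = 0"
    using Suc.prems(3) unfolding p1_def
    by (simp_all only: all_widths_Suc[where P = "\<lambda>w. w = 0" and d = d]) blast
  then obtain f where f: "lsupp p1 = {f}" "p1 f = lead d p1"
    using Suc.IH laurent_poly_qplus[OF p] lsupp_qplus_nonempty[OF p] unfolding p1_def by blast
  have top: "e d = ?t" if "e \<in> lsupp p" for e
    using le_top_deg[OF p(1) that] bot_deg_le[OF p(1) that] \<open>width (Suc d) p = 0\<close>
    unfolding width_Suc by simp
  have "f d = 0" using f unfolding p1_def lsupp_def qplus_Suc by (auto split: if_splits)
  have "e = f(d := ?t)" if e: "e \<in> lsupp p" for e
  proof -
    have "e(d := 0) \<in> lsupp p1" unfolding p1_def lsupp_qplus using e top[OF e] by auto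
    hence "e(d := 0) = f" using f(1) by auto
    thus ?thesis using top[OF e] by (auto simp: fun_eq_iff split: if_splits)
  qed
  hence "lsupp p = {f(d := ?t)}" using p(2) by blast
  moreover have "p (f(d := ?t)) = lead (Suc d) p"
    using f \<open>f d = 0\<close> unfolding lead_Suc p1_def[symmetric] unfolding p1_def qplus_Suc by simp
  ultimately show ?case by blast
qed

lemma spec_density_monomial:
  assumes "lsupp p = {e}"
  shows "spec_density d p t = (if cmod (p e) \<le> t then 1 else 0)"
proof -
  interpret prob_space "haar_torus d" by (rule prob_space_haar_torus)
  have "AE z in haar_torus d. cmod (lpeval d p z) = cmod (p e)"
    using AE_haar_torus_norm
  proof eventually_elim
    case (elim z)
    have "cmod (lpeval d p z) = cmod (p e) * (\<Prod>i<d. cmod (z i) powi e i)"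
      unfolding lpeval_def assms by (simp add: norm_mult prod_norm[symmetric] norm_power_int)
    also have "(\<Prod>i<d. cmod (z i) powi e i) = 1" using elim by (intro prod.neutral) simp
    finally show ?case by simp
  qed
  hence "spec_density d p t = measure (haar_torus d) {z \<in> space (haar_torus d). cmod (p e) \<le> t}"
    unfolding spec_density_def by (intro measure_eq_AE) auto
  thus ?thesis by (simp add: prob_space)
qed

lemma spec_density_mono:
  assumes "s \<le> t"
  shows "spec_density d p s \<le> spec_density d p t"
proof -
  interpret prob_space "haar_torus d" by (rule prob_space_haar_torus)
  show ?thesis unfolding spec_density_def using assms by (intro finite_measure_mono) auto
qed

lemma nonpos_if_le_powr:
  fixes m C a L :: real
  assumes "0 < a" "0 < L" and le: "\<And>t. 0 < t \<Longrightarrow> m \<le> C * (t / L) powr a"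
  shows "m \<le> 0"
proof -
  have "((\<lambda>t. C * (t / L) powr a) \<longlongrightarrow> C * (0 / L) powr a) (at_right 0)"
    using assms by (intro tendsto_intros) (auto simp: eventually_at_right_field intro: exI[of _ 1])
  hence "((\<lambda>t. C * (t / L) powr a) \<longlongrightarrow> 0) (at_right 0)" by simp
  thus ?thesis
    by (rule tendsto_lowerbound) (auto simp: eventually_at_right_field le intro: exI[of _ 1])
qed

lemma spec_density_le:
  assumes d: "1 \<le> d" and p: "laurent_poly d p" "lsupp p \<noteq> {}" and W: "1 \<le> wd d p"
    and t: "0 \<le> t"
  shows "spec_density d p t
           \<le> 2 * real d * real (wd d p) * (t / cmod (lead d p)) powr (1 / (real d * real (wd d p)))"
proof -
  let ?W = "wd d p" and ?L = "cmod (lead d p)"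
  have L: "0 < ?L" using lead_nonzero[OF p] by simp
  obtain d' where d': "d = Suc d'" using d by (cases d) auto
  have pos: "spec_density d p t \<le> 2 * real d * real ?W * (t / ?L) powr (1 / (real d * real ?W))"
    if "0 < t" for t
  proof -
    interpret prob_space "haar_torus d" by (rule prob_space_haar_torus)
    have "ennreal (spec_density d p t)
          = emeasure (haar_torus d) {z \<in> space (haar_torus d). cmod (lpeval d p z) \<le> t}"
      unfolding spec_density_def by (simp add: emeasure_eq_measure)
    also have "\<dots> \<le> ennreal (2 * real d * real ?W * (t / ?L) powr (1 / (real d * real ?W)))"
      using emeasure_sublevel_le[of d' p ?W t] p W width_le_wd[of _ d p] \<open>0 < t\<close>
      unfolding d' by simp
    finally show ?thesis by simp
  qed
  show ?thesis
  proof (cases "t = 0")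
    case True
    have "spec_density d p 0 \<le> 0"
    proof (rule nonpos_if_le_powr[of "1 / (real d * real ?W)" ?L])
      show "0 < 1 / (real d * real ?W)" using d W by simp
      fix t :: real assume "0 < t"
      thus "spec_density d p 0 \<le> 2 * real d * real ?W * (t / ?L) powr (1 / (real d * real ?W))"
        using spec_density_mono[of 0 t d p] pos[of t] by simp
    qed (rule L)
    thus ?thesis using True by simp
  qed (use pos t in auto)
qed

lemma two_le_8_sqrt_3_div_sqrt_47: "2 \<le> 8 * sqrt 3 / sqrt (47::real)"
proof -
  have "sqrt 47 \<le> sqrt (4\<^sup>2 * 3::real)" by simp
  also have "\<dots> = 4 * sqrt 3" by (subst real_sqrt_mult) simp
  finally show ?thesis by (simp add: field_simps)
qed

theorem proposition2p1:
  fixes d :: nat and p :: lpoly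
  assumes "d \<ge> 1" and "laurent_poly d p" and "lsupp p \<noteq> {}"
  shows "(wd d p = 0 \<longrightarrow>
            (\<forall>t. 0 \<le> t \<and> t < cmod (lead d p) \<longrightarrow> spec_density d p t = 0) \<and>
            (\<forall>t. t \<ge> cmod (lead d p) \<longrightarrow> spec_density d p t = 1)) \<and>
         (wd d p \<ge> 1 \<longrightarrow>
            (\<forall>t\<ge>0. spec_density d p t
               \<le> 8 * sqrt 3 / sqrt 47 * real d * real (wd d p)
                 * (t / cmod (lead d p)) powr (1 / (real d * real (wd d p)))))"
proof -
  have monomial: "spec_density d p t = (if cmod (lead d p) \<le> t then 1 else 0)"
    if "wd d p = 0" for t
  proof -
    have "\<forall>i<d. width (d - i) (lead_seq d i p) = 0"
      using width_le_wd[of _ d p] that by (metis le_zero_eq)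
    then obtain e where "lsupp p = {e}" "p e = lead d p"
      using widths_zero_imp_monomial[OF assms(2,3)] by blast
    thus ?thesis by (simp add: spec_density_monomial)
  qed
  have bound: "spec_density d p t
                 \<le> 8 * sqrt 3 / sqrt 47 * real d * real (wd d p)
                   * (t / cmod (lead d p)) powr (1 / (real d * real (wd d p)))"
    if "1 \<le> wd d p" "0 \<le> t" for t
  proof -
    let ?B = "real d * real (wd d p) * (t / cmod (lead d p)) powr (1 / (real d * real (wd d p)))"
    have "spec_density d p t \<le> 2 * ?B"
      using spec_density_le[OF assms that] by (simp only: mult.assoc)
    also have "\<dots> \<le> 8 * sqrt 3 / sqrt 47 * ?B"
      by (intro mult_right_mono two_le_8_sqrt_3_div_sqrt_47) simp
    finally show ?thesis by (simp only: mult.assoc)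
  qed
  show ?thesis
    using monomial bound by (intro conjI impI allI) simp_all
qed

end
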